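(* Let $\eta$ be a radial weight. Then $M_\eta:L^1([0,1),\eta)\to L^{1,\infty}([0,1),\eta)$ is bounded with norm at most one; that is, for every $f\in L^1([0,1),\eta)$ and $\lambda>0$, $$\int_{\{t\in(0,1):M_\eta f(t)>\lambda\}}\eta(s)\,ds\le\frac{1}{\lambda}\int_0^1|f(s)|\eta(s)\,ds.$$ In particular, for each $1<p<\infty$, $M_\eta:L^p([0,1),\eta)\to L^p([0,1),\eta)$ is bounded with norm depending only on $p$.
   Context: A radial weight is a nonnegative $\eta\in L^1([0,1))$ with $\widehat{\eta}(r)=\int_r^1\eta(s)\,ds>0$ for all $0\le r<1$. $L^p([0,1),\eta)$ is the space of measurable $f$ on $[0,1)$ with $\int_0^1|f|^p\eta<\infty$, and $L^{1,\infty}([0,1),\eta)$ the corresponding weak-$L^1$ space. For $0<t<1$, $M_\eta f(t)=\sup_{b<t}\frac{\int_b^1|f(s)|\eta(s)\,ds}{\widehat{\eta}(b)}$. *)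

theory Defs
  imports "HOL-Analysis.Analysis"
begin

definition eta_hat :: "(real \<Rightarrow> real) \<Rightarrow> real \<Rightarrow> real" where
  "eta_hat \<eta> r = (LINT s:{r..<1}|lborel. \<eta> s)"

definition radial_weight :: "(real \<Rightarrow> real) \<Rightarrow> bool" where
  "radial_weight \<eta> \<longleftrightarrow>
     set_integrable lborel {0..<1} \<eta> \<and> (\<forall>s\<in>{0..<1}. 0 \<le> \<eta> s) \<and>
     (\<forall>r\<in>{0..<1}. eta_hat \<eta> r > 0)"

definition in_Lp_weighted :: "(real \<Rightarrow> real) \<Rightarrow> real \<Rightarrow> (real \<Rightarrow> real) \<Rightarrow> bool" where
  "in_Lp_weighted \<eta> p f \<longleftrightarrow>
     set_borel_measurable lborel {0..<1} f \<and>
     (\<integral>\<^sup>+ s\<in>{0..<1}. ennreal (\<bar>f s\<bar> powr p * \<eta> s) \<partial>lborel) < \<infinity>"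

definition M_eta :: "(real \<Rightarrow> real) \<Rightarrow> (real \<Rightarrow> real) \<Rightarrow> real \<Rightarrow> real" where
  "M_eta \<eta> f t = (SUP b\<in>{0..<t}. (LINT s:{b..<1}|lborel. \<bar>f s\<bar> * \<eta> s) / eta_hat \<eta> b)"

end

theory Submission
  imports Defs
begin

text \<open>
  For 0 < t < 1 one has M_eta f t > lam iff the eta-average of |f| over some [b, 1) with b < t
  exceeds lam. So the level set lies in (inf B, 1), where B is the set of such b, and its
  eta-measure is the limit of the tail masses eta_hat b, b in B, each of which is at most
  ||f||_1 / lam. The L^p bound is Marcinkiewicz interpolation: by sublinearity of M_eta the set
  {M_eta f >= l} is contained in {M_eta (f 1_{|f| >= l/4}) > l/2}, and integrating the resulting
  weak-type bound against p l^(p-1) dl (layer cake and Tonelli) gives the constant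
  2p 4^(p-1) / (p - 1).
\<close>

lemma set_integrable_nonneg:
  fixes h :: "'a \<Rightarrow> real"
  assumes "set_borel_measurable M A h" "\<And>x. x \<in> A \<Longrightarrow> 0 \<le> h x"
    and "(\<integral>\<^sup>+x\<in>A. ennreal (h x) \<partial>M) < \<infinity>"
  shows "set_integrable M A h"
  unfolding set_integrable_def
proof (rule integrableI_nonneg)
  show "(\<lambda>x. indicator A x *\<^sub>R h x) \<in> borel_measurable M"
    using assms(1) by (simp add: set_borel_measurable_def)
  show "AE x in M. 0 \<le> indicator A x *\<^sub>R h x"
    using assms(2) by (simp add: indicator_def)
  have "(\<integral>\<^sup>+x. ennreal (indicator A x *\<^sub>R h x) \<partial>M) = (\<integral>\<^sup>+x\<in>A. ennreal (h x) \<partial>M)"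
    by (intro nn_integral_cong) (simp add: indicator_def)
  with assms(3) show "(\<integral>\<^sup>+x. ennreal (indicator A x *\<^sub>R h x) \<partial>M) < \<infinity>" by simp
qed

lemma nn_set_integral_eq_set_integral_nonneg:
  fixes h :: "'a \<Rightarrow> real"
  assumes "set_integrable M A h" "\<And>x. x \<in> A \<Longrightarrow> 0 \<le> h x"
  shows "(\<integral>\<^sup>+x\<in>A. ennreal (h x) \<partial>M) = ennreal (LINT x:A|M. h x)"
proof -
  have "(\<integral>\<^sup>+x\<in>A. ennreal (h x) \<partial>M) = (\<integral>\<^sup>+x. ennreal (indicator A x *\<^sub>R h x) \<partial>M)"
    by (intro nn_integral_cong) (simp add: indicator_def)
  also have "\<dots> = ennreal (LINT x:A|M. h x)"
    unfolding set_lebesgue_integral_def using assms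
    by (intro nn_integral_eq_integral) (auto simp: set_integrable_def indicator_def)
  finally show ?thesis .
qed

lemma set_integral_mono_set_nonneg:
  fixes h :: "'a \<Rightarrow> real"
  assumes "set_integrable M B h" "A \<in> sets M" "A \<subseteq> B" "\<And>x. x \<in> B \<Longrightarrow> 0 \<le> h x"
  shows "(LINT x:A|M. h x) \<le> (LINT x:B|M. h x)"
proof -
  have "ennreal (LINT x:A|M. h x) = (\<integral>\<^sup>+x\<in>A. ennreal (h x) \<partial>M)"
    using assms set_integrable_subset by (subst nn_set_integral_eq_set_integral_nonneg) auto
  also have "\<dots> \<le> (\<integral>\<^sup>+x\<in>B. ennreal (h x) \<partial>M)"
    using assms(3) by (rule nn_set_integral_set_mono)
  also have "\<dots> = ennreal (LINT x:B|M. h x)"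
    using assms by (intro nn_set_integral_eq_set_integral_nonneg)
  moreover have "0 \<le> (LINT x:B|M. h x)"
    unfolding set_lebesgue_integral_def using assms(4)
    by (intro Bochner_Integration.integral_nonneg) (simp add: indicator_def)
  ultimately show ?thesis by simp
qed

lemma emeasure_greaterThan_le:
  fixes M :: "real measure"
  assumes "sets M = sets borel" and "\<And>b. a < b \<Longrightarrow> emeasure M {b..} \<le> c"
  shows "emeasure M {a<..} \<le> c"
proof -
  define A where "A n = {a + 1 / Suc n..}" for n
  have "incseq A"
    unfolding A_def incseq_def by (auto intro!: divide_left_mono)
  have union: "{a<..} = (\<Union>n. A n)"
  proof (intro equalityI subsetI)
    fix x assume "x \<in> {a<..}"
    then obtain n where "inverse (real (Suc n)) < x - a"
      using reals_Archimedean[of "x - a"] by auto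
    then have "x \<in> A n" by (simp add: A_def field_simps)
    then show "x \<in> (\<Union>n. A n)" by blast
  next
    fix x assume "x \<in> (\<Union>n. A n)"
    then obtain n where "a + 1 / Suc n \<le> x" by (auto simp: A_def)
    moreover have "0 < 1 / real (Suc n)" by simp
    ultimately have "a < x" by linarith
    then show "x \<in> {a<..}" by simp
  qed
  have "range A \<subseteq> sets M"
    unfolding A_def assms(1) by auto
  then have "emeasure M {a<..} = (SUP n. emeasure M (A n))"
    unfolding union using \<open>incseq A\<close> by (rule SUP_emeasure_incseq[symmetric])
  also have "\<dots> \<le> c"
    unfolding A_def by (intro SUP_least assms(2)) simp
  finally show ?thesis .
qed

lemma nn_integral_powr_layer_cake:
  fixes \<phi> :: "'a \<Rightarrow> real" and w :: "'a \<Rightarrow> ennreal"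
  assumes "sigma_finite_measure M"
    and [measurable]: "\<phi> \<in> borel_measurable M" "w \<in> borel_measurable M"
    and nonneg: "\<And>x. x \<in> space M \<Longrightarrow> 0 \<le> \<phi> x" and "0 < p"
  shows "(\<integral>\<^sup>+x. w x * ennreal (\<phi> x powr p) \<partial>M)
    = (\<integral>\<^sup>+l\<in>{0..}.
        ennreal (p * l powr (p - 1)) * (\<integral>\<^sup>+x\<in>{x\<in>space M. l \<le> \<phi> x}. w x \<partial>M) \<partial>lborel)"
proof -
  interpret pair_sigma_finite M lborel
    by (intro pair_sigma_finite.intro assms(1) sigma_finite_lborel)
  define g where "g l = ennreal (p * l powr (p - 1))" for l
  have [measurable]: "g \<in> borel_measurable borel"
    unfolding g_def by measurable
  have level: "indicator {0..\<phi> x} l = (indicator {0..} l * indicator {x\<in>space M. l \<le> \<phi> x} x :: ennreal)"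
    if "x \<in> space M" for x l
    using that by (auto simp: indicator_def)
  have "ennreal (\<phi> x powr p) = (\<integral>\<^sup>+l. g l * indicator {0..\<phi> x} l \<partial>lborel)" if "x \<in> space M" for x
  proof -
    have "((\<lambda>l. p * l powr (p - 1)) has_integral p * (\<phi> x powr (p - 1 + 1) / (p - 1 + 1))) {0..\<phi> x}"
      using \<open>0 < p\<close> nonneg[OF that] by (intro has_integral_mult_right has_integral_powr_from_0) auto
    then have "(\<integral>\<^sup>+l. g l * indicator {0..\<phi> x} l \<partial>lborel) = ennreal (p * (\<phi> x powr (p - 1 + 1) / (p - 1 + 1)))"
      unfolding g_def using \<open>0 < p\<close> by (intro nn_integral_has_integral_lebesgue') auto
    with \<open>0 < p\<close> show ?thesis by simp
  qed
  then have "(\<integral>\<^sup>+x. w x * ennreal (\<phi> x powr p) \<partial>M)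
      = (\<integral>\<^sup>+x. (\<integral>\<^sup>+l. w x * (g l * indicator {0..\<phi> x} l) \<partial>lborel) \<partial>M)"
    by (intro nn_integral_cong) (simp add: nn_integral_cmult)
  also have "\<dots> = (\<integral>\<^sup>+l. (\<integral>\<^sup>+x. w x * (g l * indicator {0..\<phi> x} l) \<partial>M) \<partial>lborel)"
  proof (rule Fubini'[symmetric])
    have "case_prod (\<lambda>x l. w x * (g l * indicator {0..\<phi> x} l))
        = (\<lambda>(x, l). w x * (g l * (if 0 \<le> l \<and> l \<le> \<phi> x then 1 else 0)))"
      by (auto simp: fun_eq_iff indicator_def)
    then show "case_prod (\<lambda>x l. w x * (g l * indicator {0..\<phi> x} l)) \<in> borel_measurable (M \<Otimes>\<^sub>M lborel)"
      by simp
  qed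
  also have "\<dots> = (\<integral>\<^sup>+l\<in>{0..}. g l * (\<integral>\<^sup>+x\<in>{x\<in>space M. l \<le> \<phi> x}. w x \<partial>M) \<partial>lborel)"
  proof (intro nn_integral_cong)
    fix l :: real
    have "(\<integral>\<^sup>+x. w x * (g l * indicator {0..\<phi> x} l) \<partial>M)
        = (\<integral>\<^sup>+x. g l * indicator {0..} l * (w x * indicator {x\<in>space M. l \<le> \<phi> x} x) \<partial>M)"
      by (intro nn_integral_cong) (simp add: level mult_ac)
    also have "\<dots> = g l * indicator {0..} l * (\<integral>\<^sup>+x\<in>{x\<in>space M. l \<le> \<phi> x}. w x \<partial>M)"
      by (intro nn_integral_cmult) measurable
    finally show "(\<integral>\<^sup>+x. w x * (g l * indicator {0..\<phi> x} l) \<partial>M)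
        = g l * (\<integral>\<^sup>+x\<in>{x\<in>space M. l \<le> \<phi> x}. w x \<partial>M) * indicator {0..} l"
      by (simp add: mult_ac)
  qed
  finally show ?thesis unfolding g_def .
qed

lemma abs_le_one_plus_powr:
  fixes x :: real
  assumes "1 \<le> p"
  shows "\<bar>x\<bar> \<le> 1 + \<bar>x\<bar> powr p"
proof (cases "\<bar>x\<bar> \<le> 1")
  case False
  then have "\<bar>x\<bar> powr 1 \<le> \<bar>x\<bar> powr p"
    using assms by (intro powr_mono) auto
  then show ?thesis by simp
qed (simp add: add_increasing2)

lemma radial_weight_nonneg: "radial_weight \<eta> \<Longrightarrow> s \<in> {0..<1} \<Longrightarrow> 0 \<le> \<eta> s"
  unfolding radial_weight_def by blast

lemma eta_hat_pos: "radial_weight \<eta> \<Longrightarrow> r \<in> {0..<1} \<Longrightarrow> 0 < eta_hat \<eta> r"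
  unfolding radial_weight_def by blast

lemma set_integrable_radial_weight:
  assumes "radial_weight \<eta>" "0 \<le> b"
  shows "set_integrable lborel {b..<1} \<eta>"
  using assms unfolding radial_weight_def by (auto intro: set_integrable_subset)

lemma nn_integral_radial_weight:
  assumes "radial_weight \<eta>" "0 \<le> b"
  shows "(\<integral>\<^sup>+s\<in>{b..<1}. ennreal (\<eta> s) \<partial>lborel) = ennreal (eta_hat \<eta> b)"
  unfolding eta_hat_def using assms
  by (intro nn_set_integral_eq_set_integral_nonneg set_integrable_radial_weight)
    (auto intro: radial_weight_nonneg)

lemma eta_hat_antimono:
  assumes "radial_weight \<eta>" "0 \<le> b" "b \<le> b'"
  shows "eta_hat \<eta> b' \<le> eta_hat \<eta> b"
  unfolding eta_hat_def using assms
  by (intro set_integral_mono_set_nonneg set_integrable_radial_weight)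
    (auto intro: radial_weight_nonneg)

lemma borel_measurable_restrict_radial_weight:
  "radial_weight \<eta> \<Longrightarrow> (\<lambda>s. indicator {0..<1} s * \<eta> s) \<in> borel_measurable borel"
  unfolding radial_weight_def set_integrable_def by (auto dest: borel_measurable_integrable)

lemma borel_measurable_restrict_in_Lp_weighted:
  "in_Lp_weighted \<eta> p f \<Longrightarrow> (\<lambda>s. indicator {0..<1} s * f s) \<in> borel_measurable borel"
  unfolding in_Lp_weighted_def set_borel_measurable_def by simp

definition tail_average :: "(real \<Rightarrow> real) \<Rightarrow> (real \<Rightarrow> real) \<Rightarrow> real \<Rightarrow> real" where
  "tail_average \<eta> f b = (LINT s:{b..<1}|lborel. \<bar>f s\<bar> * \<eta> s) / eta_hat \<eta> b"

lemma M_eta_eq_SUP_tail_average: "M_eta \<eta> f t = (SUP b\<in>{0..<t}. tail_average \<eta> f b)"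
  by (simp add: M_eta_def tail_average_def)

locale radial_L1 =
  fixes \<eta> f :: "real \<Rightarrow> real"
  assumes weight: "radial_weight \<eta>" and integrable: "in_Lp_weighted \<eta> 1 f"
begin

lemma weight_nonneg: "0 \<le> s \<Longrightarrow> s < 1 \<Longrightarrow> 0 \<le> \<eta> s"
  using radial_weight_nonneg[OF weight] by simp

lemmas [measurable] =
  borel_measurable_restrict_radial_weight[OF weight] borel_measurable_restrict_in_Lp_weighted[OF integrable]

lemma borel_measurable_restrict_abs_mult [measurable]:
  "(\<lambda>s. indicator {0..<1} s * (\<bar>f s\<bar> * \<eta> s)) \<in> borel_measurable borel"
proof -
  have "(\<lambda>s. indicator {0..<1} s * (\<bar>f s\<bar> * \<eta> s))
      = (\<lambda>s. \<bar>indicator {0..<1} s * f s\<bar> * (indicator {0..<1} s * \<eta> s))"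
    by (auto simp: fun_eq_iff indicator_def)
  then show ?thesis by simp
qed

lemma set_integrable_abs_mult:
  assumes "0 \<le> b"
  shows "set_integrable lborel {b..<1} (\<lambda>s. \<bar>f s\<bar> * \<eta> s)"
proof -
  have "set_integrable lborel {0..<1} (\<lambda>s. \<bar>f s\<bar> * \<eta> s)"
  proof (rule set_integrable_nonneg)
    show "set_borel_measurable lborel {0..<1} (\<lambda>s. \<bar>f s\<bar> * \<eta> s)"
      unfolding set_borel_measurable_def by simp
    show "(\<integral>\<^sup>+s\<in>{0..<1}. ennreal (\<bar>f s\<bar> * \<eta> s) \<partial>lborel) < \<infinity>"
      using integrable unfolding in_Lp_weighted_def by simp
  qed (simp add: weight_nonneg)
  then show ?thesis
    by (rule set_integrable_subset) (use assms in auto)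
qed

definition norm_L1 :: real where
  "norm_L1 = (LINT s:{0..<1}|lborel. \<bar>f s\<bar> * \<eta> s)"

lemma tail_integral_nonneg: "0 \<le> (LINT s:{b..<1}|lborel. \<bar>f s\<bar> * \<eta> s)" if "0 \<le> b"
  unfolding set_lebesgue_integral_def using that
  by (intro Bochner_Integration.integral_nonneg)
    (auto simp: indicator_def intro!: mult_nonneg_nonneg weight_nonneg)

lemma tail_integral_le_norm_L1: "(LINT s:{b..<1}|lborel. \<bar>f s\<bar> * \<eta> s) \<le> norm_L1" if "0 \<le> b"
  unfolding norm_L1_def using that
  by (intro set_integral_mono_set_nonneg set_integrable_abs_mult)
    (auto intro!: mult_nonneg_nonneg weight_nonneg)

lemma ennreal_norm_L1: "ennreal norm_L1 = (\<integral>\<^sup>+s\<in>{0..<1}. ennreal (\<bar>f s\<bar> * \<eta> s) \<partial>lborel)"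
  unfolding norm_L1_def
  by (intro nn_set_integral_eq_set_integral_nonneg[symmetric] set_integrable_abs_mult)
    (auto intro!: mult_nonneg_nonneg weight_nonneg)

lemma tail_average_nonneg: "b \<in> {0..<1} \<Longrightarrow> 0 \<le> tail_average \<eta> f b"
  unfolding tail_average_def
  using tail_integral_nonneg eta_hat_pos[OF weight] by (simp add: less_imp_le)

lemma tail_average_le:
  assumes "0 \<le> b" "b \<le> t" "t < 1"
  shows "tail_average \<eta> f b \<le> norm_L1 / eta_hat \<eta> t"
proof -
  have "0 < eta_hat \<eta> t" "eta_hat \<eta> t \<le> eta_hat \<eta> b"
    using assms eta_hat_pos[OF weight] eta_hat_antimono[OF weight] by auto
  have "tail_average \<eta> f b \<le> norm_L1 / eta_hat \<eta> b"
    unfolding tail_average_def using assms \<open>0 < eta_hat \<eta> t\<close> \<open>eta_hat \<eta> t \<le> eta_hat \<eta> b\<close>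
    by (intro divide_right_mono tail_integral_le_norm_L1) auto
  also have "\<dots> \<le> norm_L1 / eta_hat \<eta> t"
    using tail_integral_nonneg[of 0] tail_integral_le_norm_L1[of 0] \<open>0 < eta_hat \<eta> t\<close> \<open>eta_hat \<eta> t \<le> eta_hat \<eta> b\<close>
    by (intro divide_left_mono) auto
  finally show ?thesis .
qed

text \<open>Without this bound the conditionally complete \<open>SUP\<close> in \<open>M_eta\<close> would be a junk value.\<close>

lemma bdd_above_tail_average: "t < 1 \<Longrightarrow> bdd_above (tail_average \<eta> f ` {0..<t})"
  by (rule bdd_aboveI2[where M = "norm_L1 / eta_hat \<eta> t"]) (auto intro: tail_average_le)

lemma tail_average_le_M_eta: "t < 1 \<Longrightarrow> b \<in> {0..<t} \<Longrightarrow> tail_average \<eta> f b \<le> M_eta \<eta> f t"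
  unfolding M_eta_eq_SUP_tail_average by (intro cSUP_upper bdd_above_tail_average)

lemma less_M_eta_iff:
  "t \<in> {0<..<1} \<Longrightarrow> lam < M_eta \<eta> f t \<longleftrightarrow> (\<exists>b\<in>{0..<t}. lam < tail_average \<eta> f b)"
  unfolding M_eta_eq_SUP_tail_average by (intro less_cSUP_iff bdd_above_tail_average) auto

lemma M_eta_nonneg: "t \<in> {0<..<1} \<Longrightarrow> 0 \<le> M_eta \<eta> f t"
  using tail_average_nonneg[of 0] tail_average_le_M_eta[of t 0] by auto

lemma mono_on_M_eta: "mono_on {0<..<1} (M_eta \<eta> f)"
proof (rule mono_onI)
  fix s t :: real assume "s \<in> {0<..<1}" "t \<in> {0<..<1}" "s \<le> t"
  then show "M_eta \<eta> f s \<le> M_eta \<eta> f t"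
    unfolding M_eta_eq_SUP_tail_average by (intro cSUP_subset_mono bdd_above_tail_average) auto
qed

lemma set_borel_measurable_M_eta: "set_borel_measurable borel {0<..<1} (M_eta \<eta> f)"
  unfolding set_borel_measurable_def
proof (rule borel_measurable_piecewise_mono[where C = "{{..0}, {0<..<1}, {1..}}"])
  fix c assume "c \<in> {{..0}, {0<..<1}, {1::real..}}"
  then show "mono_on c (\<lambda>t. indicator {0<..<1} t *\<^sub>R M_eta \<eta> f t)"
    using mono_on_M_eta by (auto simp: mono_on_def)
qed auto

lemma level_set_in_sets: "{t\<in>{0<..<1}. lam < M_eta \<eta> f t} \<in> sets borel"
proof -
  have "M_eta \<eta> f -` {lam<..} \<inter> {0<..<1} \<in> sets borel"
    using set_borel_measurable_M_eta by (rule set_borel_measurable_sets) auto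
  moreover have "{t\<in>{0<..<1}. lam < M_eta \<eta> f t} = M_eta \<eta> f -` {lam<..} \<inter> {0<..<1}"
    by auto
  ultimately show ?thesis by simp
qed

theorem weak_type_M_eta:
  assumes "0 < lam"
  shows "(\<integral>\<^sup>+t\<in>{t\<in>{0<..<1}. lam < M_eta \<eta> f t}. ennreal (\<eta> t) \<partial>lborel)
    \<le> ennreal (1 / lam) * (\<integral>\<^sup>+s\<in>{0..<1}. ennreal (\<bar>f s\<bar> * \<eta> s) \<partial>lborel)"
proof -
  define E where "E = {t\<in>{0<..<1}. lam < M_eta \<eta> f t}"
  define B where "B = {b\<in>{0..<1}. lam < tail_average \<eta> f b}"
  define \<nu> where "\<nu> = density lborel (\<lambda>s. ennreal (indicator {0..<1} s * \<eta> s))"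
  have sets_\<nu>: "sets \<nu> = sets borel"
    by (simp add: \<nu>_def)
  have \<nu>_atLeast: "emeasure \<nu> {b..} = ennreal (eta_hat \<eta> b)" if "0 \<le> b" for b
  proof -
    have "emeasure \<nu> {b..} = (\<integral>\<^sup>+s. ennreal (indicator {0..<1} s * \<eta> s) * indicator {b..} s \<partial>lborel)"
      unfolding \<nu>_def by (rule emeasure_density) auto
    also have "\<dots> = (\<integral>\<^sup>+s\<in>{b..<1}. ennreal (\<eta> s) \<partial>lborel)"
      using that by (intro nn_integral_cong) (auto simp: indicator_def)
    finally show ?thesis
      using nn_integral_radial_weight[OF weight that] by simp
  qed
  have B_bound: "eta_hat \<eta> b \<le> norm_L1 / lam" if "b \<in> B" for b
  proof -
    from that have b: "b \<in> {0..<1}" and "lam < tail_average \<eta> f b"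
      by (auto simp: B_def)
    then have "lam * eta_hat \<eta> b < (LINT s:{b..<1}|lborel. \<bar>f s\<bar> * \<eta> s)"
      using eta_hat_pos[OF weight b] by (simp add: tail_average_def pos_less_divide_eq mult.commute)
    also have "\<dots> \<le> norm_L1"
      using b by (intro tail_integral_le_norm_L1) auto
    finally show ?thesis
      using assms by (simp add: pos_le_divide_eq mult.commute)
  qed
  have E_sub: "E \<subseteq> (\<Union>b\<in>B. {b<..})"
    by (fastforce simp: E_def B_def less_M_eta_iff)
  have "emeasure \<nu> E = (\<integral>\<^sup>+t. ennreal (indicator {0..<1} t * \<eta> t) * indicator E t \<partial>lborel)"
    unfolding \<nu>_def E_def using level_set_in_sets[of lam] by (intro emeasure_density) auto
  then have "(\<integral>\<^sup>+t\<in>E. ennreal (\<eta> t) \<partial>lborel) = emeasure \<nu> E"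
    by (auto intro!: nn_integral_cong simp: E_def indicator_def)
  also have "\<dots> \<le> ennreal (norm_L1 / lam)"
  proof (cases "B = {}")
    case True
    with E_sub show ?thesis by simp
  next
    case False
    have "bdd_below B"
      by (auto simp: B_def bdd_below_def)
    then have "E \<subseteq> {Inf B<..}"
      using E_sub by (force dest: cInf_lower)
    then have "emeasure \<nu> E \<le> emeasure \<nu> {Inf B<..}"
      by (rule emeasure_mono) (simp add: sets_\<nu>)
    also have "\<dots> \<le> ennreal (norm_L1 / lam)"
    proof (rule emeasure_greaterThan_le[OF sets_\<nu>])
      fix b' assume "Inf B < b'"
      then obtain b where "b \<in> B" "b < b'"
        using cInf_less_iff[OF False \<open>bdd_below B\<close>] by auto
      then have "emeasure \<nu> {b'..} \<le> emeasure \<nu> {b..}"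
        by (intro emeasure_mono) (auto simp: sets_\<nu>)
      also have "\<dots> = ennreal (eta_hat \<eta> b)"
        using \<open>b \<in> B\<close> by (intro \<nu>_atLeast) (simp add: B_def)
      also have "\<dots> \<le> ennreal (norm_L1 / lam)"
        using \<open>b \<in> B\<close> by (intro ennreal_leI B_bound)
      finally show "emeasure \<nu> {b'..} \<le> ennreal (norm_L1 / lam)" .
    qed
    finally show ?thesis .
  qed
  also have "ennreal (norm_L1 / lam) = ennreal (1 / lam) * ennreal norm_L1"
    using assms by (simp add: ennreal_mult'[symmetric])
  finally show ?thesis
    unfolding E_def ennreal_norm_L1 .
qed

lemma M_eta_le_add:
  assumes "radial_L1 \<eta> g" "0 \<le> c" "\<And>s. s \<in> {0..<1} \<Longrightarrow> \<bar>f s\<bar> \<le> \<bar>g s\<bar> + c"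
    and t: "t \<in> {0<..<1}"
  shows "M_eta \<eta> f t \<le> M_eta \<eta> g t + c"
proof -
  interpret g: radial_L1 \<eta> g by fact
  have tail_average_le_add: "tail_average \<eta> f b \<le> tail_average \<eta> g b + c" if b: "b \<in> {0..<t}" for b
  proof -
    have "0 \<le> b" "b < 1" and pos: "0 < eta_hat \<eta> b"
      using b t eta_hat_pos[OF weight] by auto
    have "(LINT s:{b..<1}|lborel. \<bar>f s\<bar> * \<eta> s) \<le> (LINT s:{b..<1}|lborel. \<bar>g s\<bar> * \<eta> s + c * \<eta> s)"
      using \<open>0 \<le> b\<close> assms(3) weight_nonneg
      by (intro set_integral_mono set_integrable_abs_mult set_integral_add g.set_integrable_abs_mult
          set_integrable_mult_right set_integrable_radial_weight[OF weight])
        (auto simp: distrib_right[symmetric] intro!: mult_right_mono)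
    also have "\<dots> = (LINT s:{b..<1}|lborel. \<bar>g s\<bar> * \<eta> s) + c * eta_hat \<eta> b"
      using \<open>0 \<le> b\<close> g.set_integrable_abs_mult set_integrable_radial_weight[OF weight]
      by (simp add: eta_hat_def)
    finally show ?thesis
      using pos by (simp add: tail_average_def field_simps)
  qed
  show ?thesis
    unfolding M_eta_eq_SUP_tail_average[of \<eta> f]
  proof (rule cSUP_least)
    show "{0..<t} \<noteq> {}" using t by auto
    fix b assume b: "b \<in> {0..<t}"
    then have "tail_average \<eta> g b \<le> M_eta \<eta> g t"
      using t by (intro g.tail_average_le_M_eta) auto
    with tail_average_le_add[OF b] show "tail_average \<eta> f b \<le> M_eta \<eta> g t + c"
      by linarith
  qed
qed

lemma radial_L1_truncation: "radial_L1 \<eta> (\<lambda>s. if c \<le> \<bar>f s\<bar> then f s else 0)"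
proof
  show "radial_weight \<eta>" by (rule weight)
  have "(\<lambda>s. indicator {0..<1} s *\<^sub>R (if c \<le> \<bar>f s\<bar> then f s else 0))
      = (\<lambda>s. if c \<le> \<bar>indicator {0..<1} s * f s\<bar> then indicator {0..<1} s * f s else 0)"
    by (auto simp: fun_eq_iff indicator_def)
  then have "set_borel_measurable lborel {0..<1} (\<lambda>s. if c \<le> \<bar>f s\<bar> then f s else 0)"
    unfolding set_borel_measurable_def by simp
  moreover have "(\<integral>\<^sup>+s\<in>{0..<1}. ennreal (\<bar>if c \<le> \<bar>f s\<bar> then f s else 0\<bar> powr 1 * \<eta> s) \<partial>lborel)
      \<le> (\<integral>\<^sup>+s\<in>{0..<1}. ennreal (\<bar>f s\<bar> powr 1 * \<eta> s) \<partial>lborel)"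
    by (intro nn_integral_mono) (auto simp: indicator_def intro!: ennreal_leI mult_right_mono weight_nonneg)
  ultimately show "in_Lp_weighted \<eta> 1 (\<lambda>s. if c \<le> \<bar>f s\<bar> then f s else 0)"
    using integrable unfolding in_Lp_weighted_def by (auto intro: le_less_trans)
qed

lemma level_set_le_large_values:
  assumes "0 < l"
  shows "(\<integral>\<^sup>+t\<in>{t\<in>{0<..<1}. l \<le> M_eta \<eta> f t}. ennreal (\<eta> t) \<partial>lborel)
    \<le> ennreal (2 / l) * (\<integral>\<^sup>+s\<in>{s\<in>{0..<1}. l / 4 \<le> \<bar>f s\<bar>}. ennreal (\<bar>f s\<bar> * \<eta> s) \<partial>lborel)"
proof -
  define g where "g s = (if l / 4 \<le> \<bar>f s\<bar> then f s else 0)" for s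
  interpret g: radial_L1 \<eta> g
    unfolding g_def by (rule radial_L1_truncation)
  have "{t\<in>{0<..<1}. l \<le> M_eta \<eta> f t} \<subseteq> {t\<in>{0<..<1}. l / 2 < M_eta \<eta> g t}"
  proof
    fix t assume "t \<in> {t\<in>{0<..<1}. l \<le> M_eta \<eta> f t}"
    then have t: "t \<in> {0<..<1}" "l \<le> M_eta \<eta> f t" by auto
    have "M_eta \<eta> f t \<le> M_eta \<eta> g t + l / 4"
      by (rule M_eta_le_add) (use assms t g.radial_L1_axioms in \<open>auto simp: g_def\<close>)
    with t assms show "t \<in> {t\<in>{0<..<1}. l / 2 < M_eta \<eta> g t}" by auto
  qed
  then have "(\<integral>\<^sup>+t\<in>{t\<in>{0<..<1}. l \<le> M_eta \<eta> f t}. ennreal (\<eta> t) \<partial>lborel)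
      \<le> (\<integral>\<^sup>+t\<in>{t\<in>{0<..<1}. l / 2 < M_eta \<eta> g t}. ennreal (\<eta> t) \<partial>lborel)"
    by (rule nn_set_integral_set_mono)
  also have "\<dots> \<le> ennreal (1 / (l / 2)) * (\<integral>\<^sup>+s\<in>{0..<1}. ennreal (\<bar>g s\<bar> * \<eta> s) \<partial>lborel)"
    using assms by (intro g.weak_type_M_eta) simp
  also have "(\<integral>\<^sup>+s\<in>{0..<1}. ennreal (\<bar>g s\<bar> * \<eta> s) \<partial>lborel)
      = (\<integral>\<^sup>+s\<in>{s\<in>{0..<1}. l / 4 \<le> \<bar>f s\<bar>}. ennreal (\<bar>f s\<bar> * \<eta> s) \<partial>lborel)"
    by (intro nn_integral_cong) (auto simp: g_def indicator_def)
  finally show ?thesis by simp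
qed

text \<open>The factor \<open>2p/(p - 1)\<close> is kept inside the right-hand integrand, so that both sides are
  integrands of \<open>nn_integral_powr_layer_cake\<close> (for the exponents \<open>p\<close> and \<open>p - 1\<close>).\<close>

lemma layer_cake_integrand_le:
  assumes "1 < p" "0 \<le> l"
  shows "ennreal (p * l powr (p - 1)) *
      (\<integral>\<^sup>+t\<in>{t. l \<le> indicator {0<..<1} t * M_eta \<eta> f t}. ennreal (indicator {0..<1} t * \<eta> t) \<partial>lborel)
    \<le> ennreal ((p - 1) * l powr (p - 2)) *
      (\<integral>\<^sup>+s\<in>{s. l \<le> 4 * \<bar>indicator {0..<1} s * f s\<bar>}.
        ennreal (2 * p / (p - 1) * (indicator {0..<1} s * (\<bar>f s\<bar> * \<eta> s))) \<partial>lborel)"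
proof (cases "l = 0")
  case False
  with assms have "0 < l" by simp
  define Y where "Y = (\<integral>\<^sup>+s\<in>{s\<in>{0..<1}. l / 4 \<le> \<bar>f s\<bar>}. ennreal (\<bar>f s\<bar> * \<eta> s) \<partial>lborel)"
  have "(\<integral>\<^sup>+t\<in>{t. l \<le> indicator {0<..<1} t * M_eta \<eta> f t}. ennreal (indicator {0..<1} t * \<eta> t) \<partial>lborel)
      = (\<integral>\<^sup>+t\<in>{t\<in>{0<..<1}. l \<le> M_eta \<eta> f t}. ennreal (\<eta> t) \<partial>lborel)"
    using \<open>0 < l\<close> by (intro nn_integral_cong) (auto simp: indicator_def)
  also have "\<dots> \<le> ennreal (2 / l) * Y"
    unfolding Y_def using \<open>0 < l\<close> by (rule level_set_le_large_values)
  finally have "ennreal (p * l powr (p - 1)) *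
      (\<integral>\<^sup>+t\<in>{t. l \<le> indicator {0<..<1} t * M_eta \<eta> f t}. ennreal (indicator {0..<1} t * \<eta> t) \<partial>lborel)
    \<le> ennreal (p * l powr (p - 1)) * (ennreal (2 / l) * Y)"
    by (rule mult_left_mono) simp
  also have "\<dots> = ennreal ((p - 1) * l powr (p - 2)) * (ennreal (2 * p / (p - 1)) * Y)"
  proof -
    have "l powr (p - 1) = l powr (p - 2) * l"
      using powr_add[of l "p - 2" 1] \<open>0 < l\<close> by simp
    then have "p * l powr (p - 1) * (2 / l) = (p - 1) * l powr (p - 2) * (2 * p / (p - 1))"
      using \<open>0 < l\<close> \<open>1 < p\<close> by (simp add: field_simps)
    then show ?thesis
      using \<open>0 < l\<close> \<open>1 < p\<close> by (simp add: mult.assoc[symmetric] ennreal_mult'[symmetric])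
  qed
  also have "ennreal (2 * p / (p - 1)) * Y
      = (\<integral>\<^sup>+s. ennreal (2 * p / (p - 1)) * (ennreal (indicator {0..<1} s * (\<bar>f s\<bar> * \<eta> s))
            * indicator {s. l \<le> 4 * \<bar>indicator {0..<1} s * f s\<bar>} s) \<partial>lborel)"
  proof -
    have "Y = (\<integral>\<^sup>+s. ennreal (indicator {0..<1} s * (\<bar>f s\<bar> * \<eta> s))
        * indicator {s. l \<le> 4 * \<bar>indicator {0..<1} s * f s\<bar>} s \<partial>lborel)"
      unfolding Y_def using \<open>0 < l\<close> by (intro nn_integral_cong) (auto simp: indicator_def)
    then show ?thesis
      by (simp add: nn_integral_cmult)
  qed
  also have "\<dots> = (\<integral>\<^sup>+s\<in>{s. l \<le> 4 * \<bar>indicator {0..<1} s * f s\<bar>}.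
      ennreal (2 * p / (p - 1) * (indicator {0..<1} s * (\<bar>f s\<bar> * \<eta> s))) \<partial>lborel)"
    using \<open>1 < p\<close> by (intro nn_integral_cong) (simp add: ennreal_mult'[symmetric] mult.assoc[symmetric])
  finally show ?thesis .
qed (use assms in simp)

theorem strong_type_M_eta:
  assumes "1 < p"
  shows "(\<integral>\<^sup>+t\<in>{0<..<1}. ennreal (M_eta \<eta> f t powr p * \<eta> t) \<partial>lborel)
    \<le> ennreal (2 * p / (p - 1) * 4 powr (p - 1)) * (\<integral>\<^sup>+s\<in>{0..<1}. ennreal (\<bar>f s\<bar> powr p * \<eta> s) \<partial>lborel)"
proof -
  define \<Phi> where "\<Phi> t = indicator {0<..<1} t * M_eta \<eta> f t" for t
  define F where "F s = indicator {0..<1} s * f s" for s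
  define w where "w t = ennreal (indicator {0..<1} t * \<eta> t)" for t
  define v where "v s = ennreal (2 * p / (p - 1) * (indicator {0..<1} s * (\<bar>f s\<bar> * \<eta> s)))" for s
  have [measurable]: "\<Phi> \<in> borel_measurable borel"
    using set_borel_measurable_M_eta unfolding \<Phi>_def set_borel_measurable_def by simp
  have [measurable]: "F \<in> borel_measurable borel" "w \<in> borel_measurable borel" "v \<in> borel_measurable borel"
    unfolding F_def w_def v_def by measurable
  have \<Phi>_nonneg: "0 \<le> \<Phi> t" for t
    using M_eta_nonneg by (simp add: \<Phi>_def indicator_def)
  have "(\<integral>\<^sup>+t\<in>{0<..<1}. ennreal (M_eta \<eta> f t powr p * \<eta> t) \<partial>lborel)
      = (\<integral>\<^sup>+t. w t * ennreal (\<Phi> t powr p) \<partial>lborel)"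
    by (intro nn_integral_cong) (auto simp: w_def \<Phi>_def indicator_def ennreal_mult'' mult.commute)
  also have "\<dots> = (\<integral>\<^sup>+l\<in>{0..}.
      ennreal (p * l powr (p - 1)) * (\<integral>\<^sup>+t\<in>{t. l \<le> \<Phi> t}. w t \<partial>lborel) \<partial>lborel)"
    using nn_integral_powr_layer_cake[OF sigma_finite_lborel, of \<Phi> w p] assms \<Phi>_nonneg by simp
  also have "\<dots> \<le> (\<integral>\<^sup>+l\<in>{0..}.
      ennreal ((p - 1) * l powr (p - 2)) * (\<integral>\<^sup>+s\<in>{s. l \<le> 4 * \<bar>F s\<bar>}. v s \<partial>lborel) \<partial>lborel)"
  proof (intro nn_integral_mono)
    fix l :: real
    show "ennreal (p * l powr (p - 1)) * (\<integral>\<^sup>+t\<in>{t. l \<le> \<Phi> t}. w t \<partial>lborel) * indicator {0..} l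
      \<le> ennreal ((p - 1) * l powr (p - 2)) * (\<integral>\<^sup>+s\<in>{s. l \<le> 4 * \<bar>F s\<bar>}. v s \<partial>lborel) * indicator {0..} l"
      using layer_cake_integrand_le[OF assms, of l] by (cases "0 \<le> l") (simp_all add: \<Phi>_def F_def w_def v_def)
  qed
  also have "\<dots> = (\<integral>\<^sup>+s. v s * ennreal ((4 * \<bar>F s\<bar>) powr (p - 1)) \<partial>lborel)"
    using nn_integral_powr_layer_cake[OF sigma_finite_lborel, of "\<lambda>s. 4 * \<bar>F s\<bar>" v "p - 1"] assms by simp
  also have "\<dots> = (\<integral>\<^sup>+s. ennreal (2 * p / (p - 1) * 4 powr (p - 1))
      * ennreal (\<bar>F s\<bar> powr p * (indicator {0..<1} s * \<eta> s)) \<partial>lborel)"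
  proof (intro nn_integral_cong)
    fix s
    have "\<bar>f s\<bar> * (4 * \<bar>f s\<bar>) powr (p - 1) = 4 powr (p - 1) * \<bar>f s\<bar> powr p"
      using powr_mult_base[of "\<bar>f s\<bar>" "p - 1"] by (simp add: powr_mult)
    then show "v s * ennreal ((4 * \<bar>F s\<bar>) powr (p - 1))
      = ennreal (2 * p / (p - 1) * 4 powr (p - 1)) * ennreal (\<bar>F s\<bar> powr p * (indicator {0..<1} s * \<eta> s))"
      using assms weight_nonneg[of s]
      by (auto simp: v_def F_def indicator_def ennreal_mult'[symmetric] mult_ac)
  qed
  also have "\<dots> = ennreal (2 * p / (p - 1) * 4 powr (p - 1))
      * (\<integral>\<^sup>+s. ennreal (\<bar>F s\<bar> powr p * (indicator {0..<1} s * \<eta> s)) \<partial>lborel)"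
    by (rule nn_integral_cmult) measurable
  also have "(\<integral>\<^sup>+s. ennreal (\<bar>F s\<bar> powr p * (indicator {0..<1} s * \<eta> s)) \<partial>lborel)
      = (\<integral>\<^sup>+s\<in>{0..<1}. ennreal (\<bar>f s\<bar> powr p * \<eta> s) \<partial>lborel)"
    by (intro nn_integral_cong) (simp add: F_def indicator_def)
  finally show ?thesis .
qed

end

lemma radial_L1_if_in_Lp_weighted:
  assumes "radial_weight \<eta>" "1 \<le> p" "in_Lp_weighted \<eta> p f"
  shows "radial_L1 \<eta> f"
proof
  show "radial_weight \<eta>" by fact
  define F where "F s = indicator {0..<1} s * f s" for s
  define W where "W s = indicator {0..<1} s * \<eta> s" for s
  have [measurable]: "F \<in> borel_measurable borel" "W \<in> borel_measurable borel"
    unfolding F_def W_def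
    using borel_measurable_restrict_in_Lp_weighted[OF assms(3)] borel_measurable_restrict_radial_weight[OF assms(1)]
    by auto
  have "(\<integral>\<^sup>+s\<in>{0..<1}. ennreal (\<bar>f s\<bar> powr 1 * \<eta> s) \<partial>lborel)
      \<le> (\<integral>\<^sup>+s. ennreal (W s) + ennreal (\<bar>F s\<bar> powr p * W s) \<partial>lborel)"
  proof (intro nn_integral_mono)
    fix s :: real
    show "ennreal (\<bar>f s\<bar> powr 1 * \<eta> s) * indicator {0..<1} s \<le> ennreal (W s) + ennreal (\<bar>F s\<bar> powr p * W s)"
    proof (cases "s \<in> {0..<1}")
      case True
      then have "\<bar>f s\<bar> * \<eta> s \<le> (1 + \<bar>f s\<bar> powr p) * \<eta> s"
        using abs_le_one_plus_powr[OF assms(2)] radial_weight_nonneg[OF assms(1)] by (intro mult_right_mono)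
      then have "ennreal (\<bar>f s\<bar> * \<eta> s) \<le> ennreal (\<eta> s + \<bar>f s\<bar> powr p * \<eta> s)"
        by (intro ennreal_leI) (simp add: distrib_right)
      also have "\<dots> = ennreal (\<eta> s) + ennreal (\<bar>f s\<bar> powr p * \<eta> s)"
        using radial_weight_nonneg[OF assms(1) True] by (intro ennreal_plus) auto
      finally show ?thesis
        using True by (simp add: F_def W_def)
    qed simp
  qed
  also have "\<dots> = (\<integral>\<^sup>+s. ennreal (W s) \<partial>lborel) + (\<integral>\<^sup>+s. ennreal (\<bar>F s\<bar> powr p * W s) \<partial>lborel)"
    by (intro nn_integral_add) auto
  also have "(\<integral>\<^sup>+s. ennreal (W s) \<partial>lborel) = ennreal (eta_hat \<eta> 0)"
  proof -
    have "(\<integral>\<^sup>+s. ennreal (W s) \<partial>lborel) = (\<integral>\<^sup>+s\<in>{0..<1}. ennreal (\<eta> s) \<partial>lborel)"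
      by (intro nn_integral_cong) (simp add: W_def indicator_def)
    then show ?thesis
      using nn_integral_radial_weight[OF assms(1), of 0] by simp
  qed
  also have "(\<integral>\<^sup>+s. ennreal (\<bar>F s\<bar> powr p * W s) \<partial>lborel)
      = (\<integral>\<^sup>+s\<in>{0..<1}. ennreal (\<bar>f s\<bar> powr p * \<eta> s) \<partial>lborel)"
    using assms(2) by (intro nn_integral_cong) (simp add: F_def W_def indicator_def)
  also have "ennreal (eta_hat \<eta> 0) + \<dots> < \<infinity>"
    using assms(3) unfolding in_Lp_weighted_def by simp
  finally show "in_Lp_weighted \<eta> 1 f"
    using assms(3) unfolding in_Lp_weighted_def by simp
qed

corollary strong_type_M_eta_exists_constant:
  assumes "1 < p"
  shows "\<exists>C>0. \<forall>\<eta> f. radial_weight \<eta> \<longrightarrow> in_Lp_weighted \<eta> p f \<longrightarrow>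
    set_borel_measurable lborel {0<..<1} (M_eta \<eta> f) \<and>
    (\<integral>\<^sup>+t\<in>{0<..<1}. ennreal (M_eta \<eta> f t powr p * \<eta> t) \<partial>lborel)
      \<le> ennreal C * (\<integral>\<^sup>+s\<in>{0..<1}. ennreal (\<bar>f s\<bar> powr p * \<eta> s) \<partial>lborel)"
proof (intro exI[of _ "2 * p / (p - 1) * 4 powr (p - 1)"] conjI allI impI)
  show "0 < 2 * p / (p - 1) * 4 powr (p - 1)"
    using assms by simp
  fix \<eta> f assume "radial_weight \<eta>" "in_Lp_weighted \<eta> p f"
  then interpret radial_L1 \<eta> f
    using assms by (intro radial_L1_if_in_Lp_weighted) auto
  show "set_borel_measurable lborel {0<..<1} (M_eta \<eta> f)"
    using set_borel_measurable_M_eta unfolding set_borel_measurable_def by simp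
  show "(\<integral>\<^sup>+t\<in>{0<..<1}. ennreal (M_eta \<eta> f t powr p * \<eta> t) \<partial>lborel)
      \<le> ennreal (2 * p / (p - 1) * 4 powr (p - 1)) * (\<integral>\<^sup>+s\<in>{0..<1}. ennreal (\<bar>f s\<bar> powr p * \<eta> s) \<partial>lborel)"
    using assms by (rule strong_type_M_eta)
qed

theorem lemma6:
  shows "(\<forall>\<eta> f (lam::real). radial_weight \<eta> \<longrightarrow> in_Lp_weighted \<eta> 1 f \<longrightarrow> lam > 0 \<longrightarrow>
            {t\<in>{0<..<1}. M_eta \<eta> f t > lam} \<in> sets lborel \<and>
            (\<integral>\<^sup>+ t\<in>{t\<in>{0<..<1}. M_eta \<eta> f t > lam}. ennreal (\<eta> t) \<partial>lborel)
              \<le> ennreal (1 / lam) * (\<integral>\<^sup>+ s\<in>{0..<1}. ennreal (\<bar>f s\<bar> * \<eta> s) \<partial>lborel))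
       \<and> (\<forall>p::real. 1 < p \<longrightarrow> (\<exists>C::real. 0 < C \<and>
            (\<forall>\<eta> f. radial_weight \<eta> \<longrightarrow> in_Lp_weighted \<eta> p f \<longrightarrow>
              set_borel_measurable lborel {0<..<1} (M_eta \<eta> f) \<and>
              (\<integral>\<^sup>+ t\<in>{0<..<1}. ennreal (M_eta \<eta> f t powr p * \<eta> t) \<partial>lborel)
                \<le> ennreal C * (\<integral>\<^sup>+ s\<in>{0..<1}. ennreal (\<bar>f s\<bar> powr p * \<eta> s) \<partial>lborel))))"
  using radial_L1.intro radial_L1.level_set_in_sets radial_L1.weak_type_M_eta strong_type_M_eta_exists_constant
  by (simp add: sets_lborel)

end
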